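(* Let $A$ be a finite abelian group of even order. The trivial subgroup $\{0\}$ of $A$ is a subgroup perfect code of $A$ if and only if $A$ is an elementary abelian $2$-group.
   Context: $A$ is written additively with identity $0$. An element $x$ of $A$ is a square if $x=2y$ for some $y\in A$; a subset is square-free if it contains no squares. For a square-free $T\subseteq A$, the Cayley sum graph $\mathrm{CayS}(A,T)$ is the simple graph with vertex set $A$ in which distinct $x,y$ are adjacent iff $x+y\in T$. A subset $C$ of the vertex set of a graph is a perfect code if every vertex is at distance at most one from exactly one vertex of $C$. A subgroup $H$ of $A$ is a subgroup perfect code of $A$ if $H$ is a perfect code of $\mathrm{CayS}(A,T)$ for some square-free $T\subseteq A$ (the empty set allowed). *)

theory Defs
  imports Main
begin

definition is_square :: "'a::ab_group_add \<Rightarrow> bool" where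
  "is_square x \<longleftrightarrow> (\<exists>y. x = y + y)"

definition square_free :: "'a::ab_group_add set \<Rightarrow> bool" where
  "square_free T \<longleftrightarrow> (\<forall>x\<in>T. \<not> is_square x)"

definition cays_adj :: "'a::ab_group_add set \<Rightarrow> 'a \<Rightarrow> 'a \<Rightarrow> bool" where
  "cays_adj T x y \<longleftrightarrow> x \<noteq> y \<and> x + y \<in> T"

definition perfect_code :: "('v \<Rightarrow> 'v \<Rightarrow> bool) \<Rightarrow> 'v set \<Rightarrow> bool" where
  "perfect_code adj C \<longleftrightarrow> (\<forall>v. \<exists>!c. c \<in> C \<and> (c = v \<or> adj v c))"

definition subgroup_add :: "'a::ab_group_add set \<Rightarrow> bool" where
  "subgroup_add H \<longleftrightarrow> 0 \<in> H \<and> (\<forall>x\<in>H. \<forall>y\<in>H. x + y \<in> H) \<and> (\<forall>x\<in>H. - x \<in> H)"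

definition subgroup_perfect_code :: "'a::ab_group_add set \<Rightarrow> bool" where
  "subgroup_perfect_code H \<longleftrightarrow> subgroup_add H \<and>
     (\<exists>T. square_free T \<and> perfect_code (cays_adj T) H)"

definition elementary_abelian_2 :: "'a::ab_group_add itself \<Rightarrow> bool" where
  "elementary_abelian_2 _ \<longleftrightarrow> (\<exists>x::'a. x \<noteq> 0) \<and> (\<forall>x::'a. x + x = 0)"

end

theory Submission
  imports Defs
begin

text \<open>The closed neighbourhoods of the single vertex 0 cover A exactly once iff every nonzero
  vertex is adjacent to 0, i.e. iff A - {0} is contained in T. A square-free T containing
  A - {0} exists iff A - {0} itself is square-free, i.e. iff 2x = 0 for all x. Even order only
  serves to exclude the trivial group.\<close>

lemma perfect_code_cays_adj_zero_iff:
  "perfect_code (cays_adj T) {0} \<longleftrightarrow> - {0} \<subseteq> (T :: 'a::ab_group_add set)"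
  unfolding perfect_code_def cays_adj_def by auto

lemma square_free_subset: "square_free T \<Longrightarrow> S \<subseteq> T \<Longrightarrow> square_free S"
  unfolding square_free_def by blast

lemma square_free_compl_zero_iff:
  "square_free (- {0} :: 'a::ab_group_add set) \<longleftrightarrow> (\<forall>x::'a. x + x = 0)"
  unfolding square_free_def is_square_def by fastforce

lemma subgroup_add_zero: "subgroup_add {0}"
  unfolding subgroup_add_def by simp

lemma subgroup_perfect_code_zero_iff:
  "subgroup_perfect_code ({0} :: 'a::ab_group_add set) \<longleftrightarrow> (\<forall>x::'a. x + x = 0)"
proof -
  have "subgroup_perfect_code ({0} :: 'a set) \<longleftrightarrow>
      (\<exists>T :: 'a set. square_free T \<and> - {0} \<subseteq> T)"
    unfolding subgroup_perfect_code_def perfect_code_cays_adj_zero_iff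
    by (simp add: subgroup_add_zero)
  also have "\<dots> \<longleftrightarrow> square_free (- {0} :: 'a set)"
    using square_free_subset by blast
  finally show ?thesis
    unfolding square_free_compl_zero_iff .
qed

lemma even_card_UNIV_imp_nonzero:
  assumes "even (card (UNIV :: 'a::{zero, finite} set))"
  shows "\<exists>x::'a. x \<noteq> 0"
proof (rule ccontr)
  assume "\<not> (\<exists>x::'a. x \<noteq> 0)"
  then have "(UNIV :: 'a set) = {0}" by auto
  then have "card (UNIV :: 'a set) = card {0 :: 'a}" by (rule arg_cong)
  with assms show False by simp
qed

theorem corollary3p7:
  fixes A :: "'a::{ab_group_add, finite} itself"
  assumes "even (card (UNIV :: 'a set))"
  shows "subgroup_perfect_code ({0} :: 'a set) \<longleftrightarrow> elementary_abelian_2 A"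
  using even_card_UNIV_imp_nonzero [OF assms]
  by (simp add: subgroup_perfect_code_zero_iff elementary_abelian_2_def)

end
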